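(* Let $w\in\mathbb{R}^N_{>0}$ and assume $\mu_i\ge1$ for all $i$. Then $$\min_{x\in\mathbb{R}^N}\Big(\sum_{r\in[R]}f_r(x)+\tfrac12\|x\|_{2,w}^2\Big)=-\min_{y\in\mathcal{B}}\tfrac12\|Ay\|^2_{2,w^{-1}},$$ and the primal minimizer $x^*_w$ satisfies $x^*_w=-w^{-1}\odot Ay$ for every minimizer $y$ of $\|Ay\|^2_{2,w^{-1}}$ over $\mathcal{B}$. Moreover, for every $y\in\mathcal{B}$, $\min_{a\in\mathcal{A}}\|a-y\|^2_{2,I(w^{-1}\odot\mu)}=\|Ay\|^2_{2,w^{-1}}$, so that the problem $\min_{a,y}\|a-y\|^2_{2,I(w^{-1}\odot\mu)}$ subject to $y\in\mathcal{B}$, $a\in\mathcal{A}$ has the same optimal value and optimal $y$'s as $\min_{y\in\mathcal{B}}\|Ay\|^2_{2,w^{-1}}$.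
   Context: $F_r:2^{[N]}\to\mathbb{R}$ ($r\in[R]$) are submodular with $F_r(\emptyset)=0$, base polytopes $\mathcal{B}_r=\{u\in\mathbb{R}^N:\sum_{i\in S}u_i\le F_r(S)\ \forall S,\ \sum_iu_i=F_r([N])\}$ and Lovász extensions $f_r(x)=\max_{u\in\mathcal{B}_r}\langle u,x\rangle$; $\mathcal{B}=\mathcal{B}_1\times\cdots\times\mathcal{B}_R$; $A:(\mathbb{R}^N)^R\to\mathbb{R}^N$, $Ay=\sum_ry_r$. $S_r$ is the set of $i$ with $F_r(S\cup\{i\})\ne F_r(S)$ for some $S\subseteq[N]\setminus\{i\}$; $\mu_i=|\{r:i\in S_r\}|$. $\mathcal{A}=\{a\in(\mathbb{R}^N)^R:Aa=0,\ a_{r,i}=0\text{ whenever }i\notin S_r\}$. Powers ($w^{-1}$) and products ($\odot$) are element-wise. $\|z\|_{2,w}=\sqrt{\sum_iw_iz_i^2}$; $I(v)\in(\mathbb{R}^N)^R$ has all blocks equal to $v$; $\|y\|_{2,\theta}=\sqrt{\sum_r\|y_r\|^2_{2,\theta_r}}$. *)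

theory Defs
  imports Complex_Main
begin

text \<open>Ground set [N] is the finite type 'n, index set [R] is the finite type 'r.
  Vectors in R^N are functions 'n => real; elements of (R^N)^R are 'r => 'n => real.\<close>

definition submodular :: "('n set \<Rightarrow> real) \<Rightarrow> bool" where
  "submodular F \<longleftrightarrow> (\<forall>S T. F (S \<union> T) + F (S \<inter> T) \<le> F S + F T)"

definition base_polytope :: "('n::finite set \<Rightarrow> real) \<Rightarrow> ('n \<Rightarrow> real) set" where
  "base_polytope F = {u. (\<forall>S. (\<Sum>i\<in>S. u i) \<le> F S) \<and> (\<Sum>i\<in>UNIV. u i) = F UNIV}"

definition inner_vec :: "('n::finite \<Rightarrow> real) \<Rightarrow> ('n \<Rightarrow> real) \<Rightarrow> real" where
  "inner_vec u x = (\<Sum>i\<in>UNIV. u i * x i)"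

text \<open>Lovasz extension f(x) = max over the base polytope of <u,x> (written as Sup; attained).\<close>
definition lovasz :: "('n::finite set \<Rightarrow> real) \<Rightarrow> ('n \<Rightarrow> real) \<Rightarrow> real" where
  "lovasz F x = Sup ((\<lambda>u. inner_vec u x) ` base_polytope F)"

definition prod_base :: "('r \<Rightarrow> 'n::finite set \<Rightarrow> real) \<Rightarrow> ('r \<Rightarrow> 'n \<Rightarrow> real) set" where
  "prod_base F = {y. \<forall>r. y r \<in> base_polytope (F r)}"

definition Aop :: "('r::finite \<Rightarrow> 'n \<Rightarrow> real) \<Rightarrow> ('n \<Rightarrow> real)" where
  "Aop y = (\<lambda>i. \<Sum>r\<in>UNIV. y r i)"

definition incident :: "('n set \<Rightarrow> real) \<Rightarrow> 'n set" where
  "incident F = {i. \<exists>S. i \<notin> S \<and> F (insert i S) \<noteq> F S}"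

definition mu :: "('r::finite \<Rightarrow> 'n set \<Rightarrow> real) \<Rightarrow> 'n \<Rightarrow> nat" where
  "mu F i = card {r. i \<in> incident (F r)}"

definition Aset :: "('r::finite \<Rightarrow> 'n set \<Rightarrow> real) \<Rightarrow> ('r \<Rightarrow> 'n \<Rightarrow> real) set" where
  "Aset F = {a. Aop a = (\<lambda>i. 0) \<and> (\<forall>r i. i \<notin> incident (F r) \<longrightarrow> a r i = 0)}"

definition wnorm2 :: "('n::finite \<Rightarrow> real) \<Rightarrow> ('n \<Rightarrow> real) \<Rightarrow> real" where
  "wnorm2 w z = (\<Sum>i\<in>UNIV. w i * (z i)\<^sup>2)"

definition bnorm2 :: "('r::finite \<Rightarrow> 'n::finite \<Rightarrow> real) \<Rightarrow> ('r \<Rightarrow> 'n \<Rightarrow> real) \<Rightarrow> real" where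
  "bnorm2 \<theta> y = (\<Sum>r\<in>UNIV. wnorm2 (\<theta> r) (y r))"

definition Ivec :: "('n \<Rightarrow> real) \<Rightarrow> ('r \<Rightarrow> 'n \<Rightarrow> real)" where
  "Ivec v = (\<lambda>r. v)"

end

theory Submission
  imports Defs "HOL-Analysis.Analysis"
begin

text \<open>For y in the product of base polytopes, <y_r, x> <= f_r(x), and completing the square
  gives P(x) >= -1/2 |Ay|^2_{1/w} + 1/2 |x + Ay/w|^2_w for every x. The dual problem lives on a
  compact set, so it has a minimizer y; moving a single block y_r towards another point of its base
  polytope cannot decrease |Ay|^2_{1/w}, so y_r maximizes <., -Ay/w> over that polytope. Hence the
  bound is attained at x = -Ay/w, and the square term forces every primal minimizer to be this point.
  In the lifted problem coordinate i of a - y lives only in the mu_i blocks r with i in S_r (base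
  vectors vanish elsewhere) and sums to -(Ay)_i there, so Cauchy-Schwarz bounds |a - y|^2 below by
  |Ay|^2_{1/w}, with equality when each of these blocks of y is shifted by (Ay)_i/mu_i.\<close>

definition primal_obj :: "('r::finite \<Rightarrow> 'n::finite set \<Rightarrow> real) \<Rightarrow> ('n \<Rightarrow> real) \<Rightarrow> ('n \<Rightarrow> real) \<Rightarrow> real"
  where "primal_obj F w x = (\<Sum>r\<in>UNIV. lovasz (F r) x) + 1/2 * wnorm2 w x"

definition dual_obj :: "('n::finite \<Rightarrow> real) \<Rightarrow> ('r::finite \<Rightarrow> 'n \<Rightarrow> real) \<Rightarrow> real"
  where "dual_obj w y = wnorm2 (\<lambda>i. inverse (w i)) (Aop y)"

definition dual_to_primal :: "('n \<Rightarrow> real) \<Rightarrow> ('r::finite \<Rightarrow> 'n \<Rightarrow> real) \<Rightarrow> 'n \<Rightarrow> real"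
  where "dual_to_primal w y = (\<lambda>i. - inverse (w i) * Aop y i)"

definition lifted_obj :: "('r::finite \<Rightarrow> 'n::finite set \<Rightarrow> real) \<Rightarrow> ('n \<Rightarrow> real)
    \<Rightarrow> ('r \<Rightarrow> 'n \<Rightarrow> real) \<Rightarrow> ('r \<Rightarrow> 'n \<Rightarrow> real) \<Rightarrow> real"
  where "lifted_obj F w a y = bnorm2 (Ivec (\<lambda>i. inverse (w i) * real (mu F i))) (\<lambda>r i. a r i - y r i)"

subsection \<open>Base polytopes\<close>

lemma submodular_greedy_vector:
  assumes sm: "submodular F" and "F {} = 0" and fin: "finite U"
  shows "\<exists>u. (\<forall>S\<subseteq>U. (\<Sum>i\<in>S. u i) \<le> F S) \<and> (\<Sum>i\<in>U. u i) = (F U :: real)"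
  using fin
proof (induction U rule: finite_induct)
  case empty
  then show ?case using \<open>F {} = 0\<close> by auto
next
  case (insert e U)
  then obtain u where u1: "\<forall>S\<subseteq>U. (\<Sum>i\<in>S. u i) \<le> F S" and u2: "(\<Sum>i\<in>U. u i) = F U" by blast
  \<comment> \<open>the new coordinate is the marginal value of e; submodularity keeps all constraints valid\<close>
  define v where "v = u(e := F (insert e U) - F U)"
  have vU: "\<And>S. S \<subseteq> U \<Longrightarrow> (\<Sum>i\<in>S. v i) = (\<Sum>i\<in>S. u i)"
    using insert.hyps(2) unfolding v_def by (intro sum.cong) auto
  have "(\<Sum>i\<in>S. v i) \<le> F S" if S: "S \<subseteq> insert e U" for S
  proof (cases "e \<in> S")
    case False
    then have "S \<subseteq> U" using S by auto
    then show ?thesis using vU u1 by auto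
  next
    case True
    define T where "T = S - {e}"
    have T: "T \<subseteq> U" "S = insert e T" "e \<notin> T" using S True unfolding T_def by auto
    have "(\<Sum>i\<in>S. v i) = F (insert e U) - F U + (\<Sum>i\<in>T. u i)"
      using T vU[OF T(1)] finite_subset[OF T(1) insert.hyps(1)] by (simp add: v_def)
    also have "\<dots> \<le> F (insert e U) - F U + F T" using u1 T(1) by auto
    also have "\<dots> \<le> F S"
    proof -
      have "S \<union> U = insert e U" "S \<inter> U = T" using T insert.hyps(2) by auto
      moreover have "F (S \<union> U) + F (S \<inter> U) \<le> F S + F U" using sm unfolding submodular_def by blast
      ultimately show ?thesis by simp
    qed
    finally show ?thesis .
  qed
  moreover have "(\<Sum>i\<in>insert e U. v i) = F (insert e U)"
    using insert.hyps vU[of U] u2 by (simp add: v_def)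
  ultimately show ?case by blast
qed

lemma prod_base_nonempty:
  assumes "\<And>r. submodular (F r)" "\<And>r. F r {} = 0"
  shows "prod_base (F :: 'r \<Rightarrow> 'n::finite set \<Rightarrow> real) \<noteq> {}"
proof -
  have "\<forall>r. \<exists>u. u \<in> base_polytope (F r)"
    using submodular_greedy_vector[OF assms, of UNIV] unfolding base_polytope_def by auto
  then obtain y where "\<forall>r. y r \<in> base_polytope (F r)" by metis
  then show ?thesis unfolding prod_base_def by blast
qed

lemma base_polytope_bounds:
  assumes "u \<in> base_polytope (F :: 'n::finite set \<Rightarrow> real)"
  shows "F UNIV - F (- {i}) \<le> u i" "u i \<le> F {i}"
proof -
  have s: "(\<Sum>j\<in>S. u j) \<le> F S" for S using assms unfolding base_polytope_def by auto
  have t: "(\<Sum>j\<in>UNIV. u j) = F UNIV" using assms unfolding base_polytope_def by auto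
  show "u i \<le> F {i}" using s[of "{i}"] by simp
  have "(\<Sum>j\<in>UNIV. u j) = u i + (\<Sum>j\<in>- {i}. u j)"
    by (metis Compl_eq_Diff_UNIV UNIV_I finite sum.remove)
  then show "F UNIV - F (- {i}) \<le> u i" using s[of "- {i}"] t by auto
qed

lemma base_polytope_nonincident:
  assumes "u \<in> base_polytope (F :: 'n::finite set \<Rightarrow> real)" "i \<notin> incident F" "F {} = 0"
  shows "u i = 0"
proof -
  have h: "\<And>S. i \<notin> S \<Longrightarrow> F (insert i S) = F S" using assms(2) unfolding incident_def by auto
  have "insert i (- {i}) = UNIV" by auto
  then have "F UNIV = F (- {i})" using h[of "- {i}"] by simp
  moreover have "F {i} = 0" using h[of "{}"] assms(3) by simp
  ultimately show ?thesis using base_polytope_bounds[OF assms(1), of i] by linarith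
qed

lemma base_polytope_segment:
  assumes "u \<in> base_polytope (F :: 'n::finite set \<Rightarrow> real)" "v \<in> base_polytope F" "0 \<le> t" "t \<le> 1"
  shows "(\<lambda>i. u i + t * (v i - u i)) \<in> base_polytope F"
proof -
  have eq: "(\<Sum>i\<in>S. u i + t * (v i - u i)) = (1 - t) * (\<Sum>i\<in>S. u i) + t * (\<Sum>i\<in>S. v i)" for S
    by (simp add: sum.distrib sum_distrib_left sum_subtractf algebra_simps)
  have "(1 - t) * (\<Sum>i\<in>S. u i) + t * (\<Sum>i\<in>S. v i) \<le> (1 - t) * F S + t * F S" for S
    using assms unfolding base_polytope_def by (intro add_mono mult_left_mono) auto
  moreover have "(1 - t) * (\<Sum>i\<in>UNIV. u i) + t * (\<Sum>i\<in>UNIV. v i) = F UNIV"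
    using assms unfolding base_polytope_def by (simp add: algebra_simps)
  ultimately show ?thesis unfolding base_polytope_def mem_Collect_eq eq by (auto simp: algebra_simps)
qed

lemma prod_base_update:
  "y \<in> prod_base F \<Longrightarrow> u \<in> base_polytope (F r) \<Longrightarrow> y(r := u) \<in> prod_base F"
  unfolding prod_base_def by auto

lemma compact_box:
  "compact {y :: 'r \<Rightarrow> 'n \<Rightarrow> real. \<forall>r i. lo r i \<le> y r i \<and> y r i \<le> hi r i}"
proof -
  have "compact (PiE UNIV (\<lambda>i::'n. {lo r i..hi r i::real}))" for r
  proof -
    have "compactin (product_topology (\<lambda>_. euclidean) UNIV) (PiE UNIV (\<lambda>i::'n. {lo r i..hi r i::real}))"
      by (subst compactin_PiE) auto
    then show ?thesis by (simp add: euclidean_product_topology)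
  qed
  then have "compactin (product_topology (\<lambda>_. euclidean) UNIV)
      (PiE UNIV (\<lambda>r. PiE UNIV (\<lambda>i::'n. {lo r i..hi r i::real})))"
    by (subst compactin_PiE) auto
  moreover have "PiE UNIV (\<lambda>r. PiE UNIV (\<lambda>i::'n. {lo r i..hi r i::real}))
      = {y :: 'r \<Rightarrow> 'n \<Rightarrow> real. \<forall>r i. lo r i \<le> y r i \<and> y r i \<le> hi r i}"
    by (auto simp: PiE_UNIV_domain Pi_iff)
  ultimately show ?thesis by (simp add: euclidean_product_topology)
qed

lemma continuous_on_block_coordinate: "continuous_on UNIV (\<lambda>y::'r \<Rightarrow> 'n \<Rightarrow> real. y r i)"
  by (rule continuous_on_product_then_coordinatewise[OF continuous_on_product_coordinates])

lemma prod_base_closed: "closed (prod_base (F :: 'r \<Rightarrow> 'n::finite set \<Rightarrow> real))"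
proof -
  have eq: "prod_base F = (\<Inter>r. \<Inter>S. {y. (\<Sum>i\<in>S. y r i) \<le> F r S}) \<inter> (\<Inter>r. {y. (\<Sum>i\<in>UNIV. y r i) = F r UNIV})"
    unfolding prod_base_def base_polytope_def by auto
  have cont: "continuous_on UNIV (\<lambda>y::'r \<Rightarrow> 'n \<Rightarrow> real. \<Sum>i\<in>S. y r i)" for S r
    by (intro continuous_on_sum continuous_on_block_coordinate)
  show ?thesis unfolding eq
    by (intro closed_Int closed_INT ballI closed_Collect_le closed_Collect_eq cont continuous_on_const)
qed

lemma prod_base_compact: "compact (prod_base (F :: 'r \<Rightarrow> 'n::finite set \<Rightarrow> real))"
proof -
  let ?B = "{y :: 'r \<Rightarrow> 'n \<Rightarrow> real. \<forall>r i. F r UNIV - F r (- {i}) \<le> y r i \<and> y r i \<le> F r {i}}"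
  have "prod_base F = prod_base F \<inter> ?B"
    unfolding prod_base_def using base_polytope_bounds by blast
  moreover have "compact (prod_base F \<inter> ?B)"
    by (rule closed_Int_compact[OF prod_base_closed compact_box])
  ultimately show ?thesis by simp
qed

lemma lovasz_bdd_above:
  "bdd_above ((\<lambda>u. inner_vec u x) ` base_polytope (F :: 'n::finite set \<Rightarrow> real))"
proof (rule bdd_aboveI2)
  fix u assume u: "u \<in> base_polytope F"
  have "u i * x i \<le> (\<bar>F UNIV - F (- {i})\<bar> + \<bar>F {i}\<bar>) * \<bar>x i\<bar>" for i
  proof -
    have "\<bar>u i\<bar> \<le> \<bar>F UNIV - F (- {i})\<bar> + \<bar>F {i}\<bar>" using base_polytope_bounds[OF u, of i] by linarith
    then have "\<bar>u i\<bar> * \<bar>x i\<bar> \<le> (\<bar>F UNIV - F (- {i})\<bar> + \<bar>F {i}\<bar>) * \<bar>x i\<bar>"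
      by (intro mult_right_mono) auto
    then show ?thesis by (metis abs_ge_self abs_mult order_trans)
  qed
  then show "inner_vec u x \<le> (\<Sum>i\<in>UNIV. (\<bar>F UNIV - F (- {i})\<bar> + \<bar>F {i}\<bar>) * \<bar>x i\<bar>)"
    unfolding Defs.inner_vec_def by (simp add: sum_mono)
qed

lemma inner_le_lovasz:
  "u \<in> base_polytope (F :: 'n::finite set \<Rightarrow> real) \<Longrightarrow> inner_vec u x \<le> lovasz F x"
  unfolding lovasz_def using lovasz_bdd_above by (intro cSup_upper) auto

lemma lovasz_eq_inner_if_maximal:
  "u \<in> base_polytope (F :: 'n::finite set \<Rightarrow> real) \<Longrightarrow> \<forall>v\<in>base_polytope F. inner_vec v x \<le> inner_vec u x
    \<Longrightarrow> lovasz F x = inner_vec u x"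
  unfolding lovasz_def by (intro cSup_eq_maximum) auto

lemma wnorm2_nonneg: "(\<And>i. w i \<ge> 0) \<Longrightarrow> wnorm2 w z \<ge> 0"
  unfolding wnorm2_def by (intro sum_nonneg) simp

lemma wnorm2_le_0_imp_zero:
  assumes "\<And>i. w i > 0" "wnorm2 w z \<le> 0"
  shows "z = (\<lambda>i. 0)"
proof -
  have nn: "\<forall>i\<in>UNIV. 0 \<le> w i * (z i)\<^sup>2" using assms(1) by (simp add: less_imp_le)
  then have "wnorm2 w z = 0" using assms(2) unfolding wnorm2_def by (meson antisym sum_nonneg)
  then have "\<forall>i\<in>UNIV. w i * (z i)\<^sup>2 = 0" using nn unfolding wnorm2_def by (simp add: sum_nonneg_eq_0_iff)
  then show ?thesis using assms(1) by (intro ext) (metis UNIV_I less_irrefl mult_eq_0_iff power_eq_0_iff)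
qed

lemma sum_inner_eq_inner_Aop:
  "(\<Sum>r\<in>UNIV. inner_vec (y r) x) = inner_vec (Aop (y :: 'r::finite \<Rightarrow> 'n::finite \<Rightarrow> real)) x"
  unfolding Defs.inner_vec_def Aop_def by (subst sum.swap) (simp add: sum_distrib_right)

lemma completing_square:
  assumes "\<And>i. w i > 0"
  shows "inner_vec v x + 1/2 * wnorm2 w x
    = - 1/2 * wnorm2 (\<lambda>i. inverse (w i)) v + 1/2 * wnorm2 w (\<lambda>i. x i + inverse (w i) * v i)"
proof -
  have pointwise: "v i * x i + 1/2 * (w i * (x i)\<^sup>2)
      = - 1/2 * (inverse (w i) * (v i)\<^sup>2) + 1/2 * (w i * (x i + inverse (w i) * v i)\<^sup>2)" for i
    using assms[of i] by (simp add: field_simps power2_eq_square)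
  have "inner_vec v x + 1/2 * wnorm2 w x = (\<Sum>i\<in>UNIV. v i * x i + 1/2 * (w i * (x i)\<^sup>2))"
    by (simp only: Defs.inner_vec_def wnorm2_def sum.distrib sum_distrib_left)
  also have "\<dots> = (\<Sum>i\<in>UNIV. - 1/2 * (inverse (w i) * (v i)\<^sup>2) + 1/2 * (w i * (x i + inverse (w i) * v i)\<^sup>2))"
    by (rule sum.cong[OF refl pointwise])
  also have "\<dots> = - 1/2 * wnorm2 (\<lambda>i. inverse (w i)) v + 1/2 * wnorm2 w (\<lambda>i. x i + inverse (w i) * v i)"
    by (simp only: wnorm2_def sum.distrib sum_distrib_left)
  finally show ?thesis .
qed

subsection \<open>The dual problem\<close>

lemma dual_obj_has_minimizer:
  fixes F :: "'r::finite \<Rightarrow> 'n::finite set \<Rightarrow> real"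
  assumes "\<And>r. submodular (F r)" "\<And>r. F r {} = 0"
  shows "\<exists>y0\<in>prod_base F. \<forall>y\<in>prod_base F. dual_obj w y0 \<le> dual_obj w y"
proof (rule continuous_attains_inf[OF prod_base_compact prod_base_nonempty[OF assms]])
  have "continuous_on UNIV (dual_obj w :: ('r \<Rightarrow> 'n \<Rightarrow> real) \<Rightarrow> real)"
    unfolding dual_obj_def wnorm2_def Aop_def
    by (intro continuous_on_sum continuous_on_mult continuous_on_const continuous_on_power
        continuous_on_block_coordinate)
  then show "continuous_on (prod_base F) (dual_obj w)" by (rule continuous_on_subset) simp
qed

lemma nonneg_if_quadratic_perturbation_nonneg:
  fixes L Q :: real
  assumes "Q \<ge> 0" "\<And>t. 0 < t \<Longrightarrow> t \<le> 1 \<Longrightarrow> 0 \<le> 2 * t * L + t\<^sup>2 * Q"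
  shows "L \<ge> 0"
proof (rule ccontr)
  assume "\<not> L \<ge> 0"
  then have L: "L < 0" by simp
  define t where "t = min 1 (- L / (Q + 1))"
  have t: "0 < t" "t \<le> 1" using L assms(1) unfolding t_def by (auto simp: field_simps)
  have "t \<le> - L / (Q + 1)" unfolding t_def by simp
  then have "t * (Q + 1) \<le> - L" using assms(1) by (simp add: field_simps)
  then have "t * (t * Q) \<le> t * (- L)" using t by (intro mult_left_mono) (auto simp: algebra_simps)
  then have "2 * t * L + t\<^sup>2 * Q \<le> t * L" by (simp add: power2_eq_square algebra_simps)
  moreover have "t * L < 0" using t L by (simp add: mult_pos_neg)
  ultimately show False using assms(2)[OF t] by linarith
qed

lemma dual_obj_update:
  fixes y :: "'r::finite \<Rightarrow> 'n::finite \<Rightarrow> real"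
  shows "dual_obj w (y(r := \<lambda>i. y r i + t * d i))
    = dual_obj w y + 2 * t * (\<Sum>i\<in>UNIV. inverse (w i) * Aop y i * d i) + t\<^sup>2 * wnorm2 (\<lambda>i. inverse (w i)) d"
proof -
  have "(y(r := \<lambda>i. y r i + t * d i)) r' i = y r' i + (if r' = r then t * d i else 0)" for r' i
    by simp
  then have A: "Aop (y(r := \<lambda>i. y r i + t * d i)) i = Aop y i + t * d i" for i
    unfolding Aop_def by (simp only: sum.distrib) simp
  have "dual_obj w (y(r := \<lambda>i. y r i + t * d i)) = (\<Sum>i\<in>UNIV. inverse (w i) * (Aop y i)\<^sup>2
      + 2 * t * (inverse (w i) * Aop y i * d i) + t\<^sup>2 * (inverse (w i) * (d i)\<^sup>2))"
    unfolding dual_obj_def wnorm2_def A by (intro sum.cong) (auto simp: power2_eq_square algebra_simps)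
  then show ?thesis
    unfolding dual_obj_def wnorm2_def by (simp add: sum.distrib sum_distrib_left)
qed

lemma dual_minimizer_maximizes_inner:
  fixes F :: "'r::finite \<Rightarrow> 'n::finite set \<Rightarrow> real"
  assumes wpos: "\<And>i. w i > 0" and y: "y \<in> prod_base F"
    and ymin: "\<forall>y'\<in>prod_base F. dual_obj w y \<le> dual_obj w y'"
    and v: "v \<in> base_polytope (F r)"
  shows "inner_vec v (dual_to_primal w y) \<le> inner_vec (y r) (dual_to_primal w y)"
proof -
  define d where "d i = v i - y r i" for i
  define L where "L = (\<Sum>i\<in>UNIV. inverse (w i) * Aop y i * d i)"
  have "0 \<le> 2 * t * L + t\<^sup>2 * wnorm2 (\<lambda>i. inverse (w i)) d" if t: "0 < t" "t \<le> 1" for t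
  proof -
    have "(\<lambda>i. y r i + t * d i) \<in> base_polytope (F r)"
      unfolding d_def using y v t by (intro base_polytope_segment) (auto simp: prod_base_def)
    then have "dual_obj w y \<le> dual_obj w (y(r := \<lambda>i. y r i + t * d i))"
      using ymin prod_base_update[OF y] by blast
    then show ?thesis unfolding dual_obj_update L_def by simp
  qed
  moreover have "wnorm2 (\<lambda>i. inverse (w i)) d \<ge> 0"
    using wpos by (intro wnorm2_nonneg) (simp add: less_imp_le)
  ultimately have "L \<ge> 0" using nonneg_if_quadratic_perturbation_nonneg by blast
  moreover have "inner_vec v (dual_to_primal w y) - inner_vec (y r) (dual_to_primal w y) = - L"
    unfolding Defs.inner_vec_def L_def d_def dual_to_primal_def
    by (simp add: sum_subtractf[symmetric] sum_negf[symmetric] algebra_simps)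
  ultimately show ?thesis by linarith
qed

subsection \<open>Primal-dual optimality\<close>

lemma primal_obj_lower_bound:
  assumes "\<And>i. w i > 0" and "y \<in> prod_base F"
  shows "- 1/2 * dual_obj w y + 1/2 * wnorm2 w (\<lambda>i. x i - dual_to_primal w y i) \<le> primal_obj F w x"
proof -
  have "(\<Sum>r\<in>UNIV. inner_vec (y r) x) \<le> (\<Sum>r\<in>UNIV. lovasz (F r) x)"
    using assms(2) unfolding prod_base_def by (intro sum_mono inner_le_lovasz) auto
  then show ?thesis
    using completing_square[where w=w, OF assms(1), of "Aop y" x]
    unfolding primal_obj_def dual_obj_def dual_to_primal_def sum_inner_eq_inner_Aop by simp
qed

lemma primal_obj_dual_to_primal:
  assumes wpos: "\<And>i. w i > 0" and y: "y \<in> prod_base F"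
    and ymin: "\<forall>y'\<in>prod_base F. dual_obj w y \<le> dual_obj w y'"
  shows "primal_obj F w (dual_to_primal w y) = - 1/2 * dual_obj w y"
proof -
  have "lovasz (F r) (dual_to_primal w y) = inner_vec (y r) (dual_to_primal w y)" for r
    using y dual_minimizer_maximizes_inner[where w=w, OF wpos y ymin]
    by (intro lovasz_eq_inner_if_maximal) (auto simp: prod_base_def)
  then have "primal_obj F w (dual_to_primal w y)
      = inner_vec (Aop y) (dual_to_primal w y) + 1/2 * wnorm2 w (dual_to_primal w y)"
    unfolding primal_obj_def by (simp add: sum_inner_eq_inner_Aop)
  also have "\<dots> = - 1/2 * dual_obj w y"
    using completing_square[where w=w, OF wpos, of "Aop y" "dual_to_primal w y"]
    unfolding dual_obj_def by (simp add: dual_to_primal_def wnorm2_def)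
  finally show ?thesis .
qed

lemma primal_minimizer_iff:
  assumes wpos: "\<And>i. w i > 0" and y: "y \<in> prod_base F"
    and ymin: "\<forall>y'\<in>prod_base F. dual_obj w y \<le> dual_obj w y'"
  shows "(\<forall>x'. primal_obj F w x \<le> primal_obj F w x') \<longleftrightarrow> x = dual_to_primal w y"
proof
  assume "\<forall>x'. primal_obj F w x \<le> primal_obj F w x'"
  then have "primal_obj F w x \<le> primal_obj F w (dual_to_primal w y)" by blast
  then have "wnorm2 w (\<lambda>i. x i - dual_to_primal w y i) \<le> 0"
    using primal_obj_lower_bound[where w=w and x=x, OF wpos y]
      primal_obj_dual_to_primal[where w=w, OF wpos y ymin] by linarith
  then have "(\<lambda>i. x i - dual_to_primal w y i) = (\<lambda>i. 0)"
    by (rule wnorm2_le_0_imp_zero[where w=w, OF wpos])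
  then show "x = dual_to_primal w y" by (simp add: fun_eq_iff)
next
  assume x: "x = dual_to_primal w y"
  show "\<forall>x'. primal_obj F w x \<le> primal_obj F w x'"
  proof
    fix x'
    have "0 \<le> wnorm2 w (\<lambda>i. x' i - dual_to_primal w y i)"
      using wpos by (intro wnorm2_nonneg) (simp add: less_imp_le)
    then show "primal_obj F w x \<le> primal_obj F w x'" unfolding x
      using primal_obj_lower_bound[where w=w and x=x', OF wpos y]
        primal_obj_dual_to_primal[where w=w, OF wpos y ymin] by linarith
  qed
qed

lemma strong_duality:
  assumes wpos: "\<And>i. w i > 0" and y: "y \<in> prod_base F"
    and ymin: "\<forall>y'\<in>prod_base F. dual_obj w y \<le> dual_obj w y'"
  shows "(INF x. primal_obj F w x) = - (INF y'\<in>prod_base F. 1/2 * dual_obj w y')"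
proof -
  have "(INF x. primal_obj F w x) = primal_obj F w (dual_to_primal w y)"
    using primal_minimizer_iff[where w=w, OF wpos y ymin] by (intro cInf_eq_minimum) auto
  moreover have "(INF y'\<in>prod_base F. 1/2 * dual_obj w y') = 1/2 * dual_obj w y"
    using y ymin by (intro cInf_eq_minimum) auto
  ultimately show ?thesis using primal_obj_dual_to_primal[where w=w, OF wpos y ymin] by simp
qed

subsection \<open>The lifted problem\<close>

lemma bnorm2_Ivec:
  "bnorm2 (Ivec c) z = (\<Sum>i\<in>UNIV. c i * (\<Sum>r\<in>UNIV. (z r i)\<^sup>2))"
  unfolding bnorm2_def Ivec_def wnorm2_def by (subst sum.swap) (simp add: sum_distrib_left)

lemma sum_incident_blocks:
  fixes f :: "'r::finite \<Rightarrow> real"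
  assumes "\<And>r. i \<notin> incident (F r) \<Longrightarrow> f r = 0"
  shows "(\<Sum>r\<in>UNIV. f r) = (\<Sum>r | i \<in> incident (F r). f r)"
  using assms by (intro sum.mono_neutral_right) auto

lemma dual_obj_le_lifted_obj:
  fixes F :: "'r::finite \<Rightarrow> 'n::finite set \<Rightarrow> real"
  assumes wpos: "\<And>i. w i > 0" and empty0: "\<And>r. F r {} = 0"
    and y: "y \<in> prod_base F" and a: "a \<in> Aset F"
  shows "dual_obj w y \<le> lifted_obj F w a y"
  unfolding lifted_obj_def dual_obj_def bnorm2_Ivec wnorm2_def
proof (rule sum_mono)
  fix i
  let ?z = "\<lambda>r. a r i - y r i"
  have z0: "?z r = 0" if "i \<notin> incident (F r)" for r
    using a y base_polytope_nonincident[of "y r" "F r" i] empty0 that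
    unfolding Aset_def prod_base_def by auto
  have "(\<Sum>r | i \<in> incident (F r). ?z r) = - Aop y i"
    using a sum_incident_blocks[of i F ?z, OF z0]
    unfolding Aset_def Aop_def by (simp add: sum_subtractf fun_eq_iff)
  then have "(Aop y i)\<^sup>2 \<le> real (mu F i) * (\<Sum>r\<in>UNIV. (?z r)\<^sup>2)"
    using sum_squared_le_sum_of_squares[of ?z "{r. i \<in> incident (F r)}"]
      sum_incident_blocks[of i F "\<lambda>r. (?z r)\<^sup>2"] z0
    unfolding mu_def by (simp add: mult.commute)
  then show "inverse (w i) * (Aop y i)\<^sup>2 \<le> inverse (w i) * real (mu F i) * (\<Sum>r\<in>UNIV. (?z r)\<^sup>2)"
    using wpos[of i] by (simp add: mult.assoc mult_left_mono)
qed

lemma lifted_obj_attains_dual_obj: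
  fixes F :: "'r::finite \<Rightarrow> 'n::finite set \<Rightarrow> real"
  assumes empty0: "\<And>r. F r {} = 0" and mu_ge: "\<And>i. mu F i \<ge> 1" and y: "y \<in> prod_base F"
  shows "\<exists>a\<in>Aset F. lifted_obj F w a y = dual_obj w y"
proof
  define a where "a r i = (if i \<in> incident (F r) then y r i - Aop y i / real (mu F i) else 0)" for r i
  have y0: "y r i = 0" if "i \<notin> incident (F r)" for r i
    using y that base_polytope_nonincident[of "y r" "F r" i] empty0 unfolding prod_base_def by auto
  have m0: "real (mu F i) > 0" for i using mu_ge[of i] by simp
  have "Aop a i = 0" for i
  proof -
    have "Aop a i = (\<Sum>r | i \<in> incident (F r). a r i)"
      unfolding Aop_def by (rule sum_incident_blocks) (simp add: a_def)
    also have "\<dots> = (\<Sum>r | i \<in> incident (F r). y r i - Aop y i / real (mu F i))"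
      by (rule sum.cong) (auto simp: a_def)
    also have "\<dots> = (\<Sum>r | i \<in> incident (F r). y r i) - Aop y i"
      using m0[of i] by (simp add: sum_subtractf mu_def[symmetric])
    also have "(\<Sum>r | i \<in> incident (F r). y r i) = Aop y i"
      unfolding Aop_def by (rule sum_incident_blocks[symmetric]) (rule y0)
    finally show ?thesis by simp
  qed
  then show "a \<in> Aset F" unfolding Aset_def a_def by auto
  show "lifted_obj F w a y = dual_obj w y"
    unfolding lifted_obj_def dual_obj_def bnorm2_Ivec wnorm2_def
  proof (rule sum.cong[OF refl])
    fix i
    have "(\<Sum>r\<in>UNIV. (a r i - y r i)\<^sup>2) = real (mu F i) * (Aop y i / real (mu F i))\<^sup>2"
      by (subst sum_incident_blocks[of i F]) (auto simp: a_def y0 mu_def)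
    then show "inverse (w i) * real (mu F i) * (\<Sum>r\<in>UNIV. (a r i - y r i)\<^sup>2) = inverse (w i) * (Aop y i)\<^sup>2"
      using m0[of i] by (simp add: power2_eq_square field_simps)
  qed
qed

lemma partial_minimization:
  fixes G :: "'a \<Rightarrow> 'b \<Rightarrow> real" and D :: "'b \<Rightarrow> real"
  assumes attains: "\<And>y. y \<in> Y \<Longrightarrow> \<exists>a\<in>A. G a y = D y"
    and lower: "\<And>y a. y \<in> Y \<Longrightarrow> a \<in> A \<Longrightarrow> D y \<le> G a y"
    and y0: "y0 \<in> Y" "\<forall>y\<in>Y. D y0 \<le> D y"
  shows "\<exists>a0\<in>A. \<exists>y0\<in>Y. \<forall>a\<in>A. \<forall>y\<in>Y. G a0 y0 \<le> G a y"
    and "(INF ay\<in>A \<times> Y. G (fst ay) (snd ay)) = (INF y\<in>Y. D y)"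
    and "y \<in> Y \<Longrightarrow> (\<exists>a\<in>A. \<forall>a'\<in>A. \<forall>y'\<in>Y. G a y \<le> G a' y') \<longleftrightarrow> (\<forall>y'\<in>Y. D y \<le> D y')"
proof -
  obtain a0 where a0: "a0 \<in> A" "G a0 y0 = D y0" using attains[OF y0(1)] by blast
  have a0_min: "\<forall>a\<in>A. \<forall>y\<in>Y. G a0 y0 \<le> G a y" using a0 y0 lower by (metis order_trans)
  then show "\<exists>a0\<in>A. \<exists>y0\<in>Y. \<forall>a\<in>A. \<forall>y\<in>Y. G a0 y0 \<le> G a y" using a0(1) y0(1) by blast
  have "(INF ay\<in>A \<times> Y. G (fst ay) (snd ay)) = G a0 y0"
    using a0(1) y0(1) a0_min by (intro cInf_eq_minimum) force+
  moreover have "(INF y\<in>Y. D y) = D y0" using y0 by (intro cInf_eq_minimum) auto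
  ultimately show "(INF ay\<in>A \<times> Y. G (fst ay) (snd ay)) = (INF y\<in>Y. D y)" using a0 by simp
  assume y: "y \<in> Y"
  show "(\<exists>a\<in>A. \<forall>a'\<in>A. \<forall>y'\<in>Y. G a y \<le> G a' y') \<longleftrightarrow> (\<forall>y'\<in>Y. D y \<le> D y')"
    using attains lower y by (metis order_trans)
qed

theorem mainTheorem14:
  fixes F :: "'r::finite \<Rightarrow> 'n::finite set \<Rightarrow> real"
    and w :: "'n \<Rightarrow> real"
  assumes submod: "\<And>r. submodular (F r)"
    and empty0: "\<And>r. F r {} = 0"
    and wpos: "\<And>i. w i > 0"
    and mu_ge: "\<And>i. mu F i \<ge> 1"
  defines "P \<equiv> (\<lambda>x. (\<Sum>r\<in>UNIV. lovasz (F r) x) + 1/2 * wnorm2 w x)"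
    and "D \<equiv> (\<lambda>y. wnorm2 (\<lambda>i. inverse (w i)) (Aop y))"
    and "G \<equiv> (\<lambda>a y. bnorm2 (Ivec (\<lambda>i. inverse (w i) * real (mu F i))) (\<lambda>r i. a r i - y r i))"
  shows
    "(\<exists>x0. \<forall>x. P x0 \<le> P x)
     \<and> (\<exists>y0\<in>prod_base F. \<forall>y\<in>prod_base F. 1/2 * D y0 \<le> 1/2 * D y)
     \<and> (INF x. P x) = - (INF y\<in>prod_base F. 1/2 * D y)
     \<and> (\<forall>x y. (\<forall>x'. P x \<le> P x') \<longrightarrow> y \<in> prod_base F \<longrightarrow> (\<forall>y'\<in>prod_base F. D y \<le> D y')
           \<longrightarrow> x = (\<lambda>i. - inverse (w i) * Aop y i))
     \<and> (\<forall>y\<in>prod_base F. (\<exists>a\<in>Aset F. G a y = D y) \<and> (\<forall>a\<in>Aset F. D y \<le> G a y))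
     \<and> (\<exists>a0\<in>Aset F. \<exists>y0\<in>prod_base F. \<forall>a\<in>Aset F. \<forall>y\<in>prod_base F. G a0 y0 \<le> G a y)
     \<and> (INF ay\<in>Aset F \<times> prod_base F. G (fst ay) (snd ay)) = (INF y\<in>prod_base F. D y)
     \<and> (\<forall>y\<in>prod_base F. (\<exists>a\<in>Aset F. \<forall>a'\<in>Aset F. \<forall>y'\<in>prod_base F. G a y \<le> G a' y')
           \<longleftrightarrow> (\<forall>y'\<in>prod_base F. D y \<le> D y'))"
proof -
  have defs: "P = primal_obj F w" "D = dual_obj w" "G = lifted_obj F w"
    unfolding P_def D_def G_def primal_obj_def dual_obj_def lifted_obj_def by (rule refl)+
  obtain y0 where y0: "y0 \<in> prod_base F" "\<forall>y\<in>prod_base F. dual_obj w y0 \<le> dual_obj w y"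
    using dual_obj_has_minimizer[where F=F and w=w, OF submod empty0] by blast
  note primal_min = primal_minimizer_iff[where w=w, OF wpos]
  have unique: "\<forall>x y. (\<forall>x'. primal_obj F w x \<le> primal_obj F w x') \<longrightarrow> y \<in> prod_base F
      \<longrightarrow> (\<forall>y'\<in>prod_base F. dual_obj w y \<le> dual_obj w y') \<longrightarrow> x = dual_to_primal w y"
    using primal_min by blast
  have "\<forall>x. primal_obj F w (dual_to_primal w y0) \<le> primal_obj F w x"
    using primal_min[OF y0] by blast
  moreover note strong_duality[where w=w, OF wpos y0]
  moreover have "\<forall>y\<in>prod_base F. 1/2 * dual_obj w y0 \<le> 1/2 * dual_obj w y"
    using y0(2) by simp
  moreover note attains = lifted_obj_attains_dual_obj[where F=F and w=w, OF empty0 mu_ge]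
    and lower = dual_obj_le_lifted_obj[where F=F and w=w, OF wpos empty0]
  moreover note partial_minimization[OF attains lower y0]
  ultimately show ?thesis
    unfolding defs dual_to_primal_def[symmetric] using y0(1) unique by (intro conjI) blast+
qed

end
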